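(* Let $\alpha,\beta$ be real (or complex) parameters and let $k,m,s$ be non-negative integers with $s\le k$. Then $$\genfrac{\lfloor}{\rfloor}{0pt}{}{k+m}{k}^{\alpha,\beta}=\sum_{j=0}^{s}\left(\sum_{k-j\le i_1\le i_2\le\cdots\le i_{s-j}\le k}\ \prod_{l=0}^{s-j-1}\Big((\alpha+\beta)i_{l+1}+\alpha\big(m-(s-j-l)\big)\Big)\right)\genfrac{\lfloor}{\rfloor}{0pt}{}{k+m-s}{k-j}^{\alpha,\beta},$$ where, for $j=s$, the inner sum is over the empty tuple and equals $1$ (empty product).
   Context: For parameters $\alpha,\beta$, the generalized Stirling numbers $\genfrac{\lfloor}{\rfloor}{0pt}{}{n}{k}^{\alpha,\beta}$, $0\le k\le n$, are defined by the polynomial identity in $x$ $$x(x+\alpha)\cdots(x+(n-1)\alpha)=\sum_{k=0}^{n}\genfrac{\lfloor}{\rfloor}{0pt}{}{n}{k}^{\alpha,\beta}\,x(x-\beta)\cdots(x-(k-1)\beta),$$ (empty products equal $1$), and $\genfrac{\lfloor}{\rfloor}{0pt}{}{n}{k}^{\alpha,\beta}=0$ for $n<0$, $k<0$ or $k>n$. *)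

theory Defs
  imports Main
begin

definition gstirling :: "'a::field_char_0 \<Rightarrow> 'a \<Rightarrow> nat \<Rightarrow> nat \<Rightarrow> 'a" where
  "gstirling a b n k =
     (THE c::nat \<Rightarrow> 'a. (\<forall>i>n. c i = 0) \<and>
        (\<forall>x. (\<Prod>i<n. x + of_nat i * a) = (\<Sum>i\<le>n. c i * (\<Prod>l<i. x - of_nat l * b)))) k"

text \<open>Weakly increasing tuples (i_1,...,i_r) with lo \<le> i_1 \<le> ... \<le> i_r \<le> hi,
  encoded as functions f with f t = i_(t+1) for t < r and f t = 0 for t \<ge> r.\<close>

definition mono_tuples :: "nat \<Rightarrow> nat \<Rightarrow> nat \<Rightarrow> (nat \<Rightarrow> nat) set" where
  "mono_tuples r lo hi =
     {f. (\<forall>t<r. lo \<le> f t \<and> f t \<le> hi) \<and> (\<forall>t u. t \<le> u \<longrightarrow> u < r \<longrightarrow> f t \<le> f u)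
         \<and> (\<forall>t\<ge>r. f t = 0)}"

end

theory Submission
  imports Defs "HOL-Computational_Algebra.Polynomial"
begin

text \<open>The generalized Stirling numbers satisfy the triangular recurrence
  \<open>S(n+1,k) = S(n,k-1) + (k\<beta> + n\<alpha>) S(n,k)\<close>, obtained by multiplying the expansion of the rising
  product by \<open>x + n\<alpha> = (x - k\<beta>) + (k\<beta> + n\<alpha>)\<close>. Iterating it \<open>s\<close> times, starting from
  \<open>S(k+m,k)\<close>, moves down one level of \<open>n\<close> per step. At each step, every term either keeps its
  column \<open>k-j\<close>, picking up the factor \<open>(\<alpha>+\<beta>)(k-j) + \<alpha>(m-(s-j))\<close>, or moves one column to
  the left. Collecting the factors accumulated along each path gives the sum over weakly
  increasing tuples, which satisfies the same one-step recursion in its lower bound.\<close>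

definition gfalling_poly :: "'a::field_char_0 \<Rightarrow> nat \<Rightarrow> 'a poly" where
  "gfalling_poly b i = (\<Prod>l<i. [:- (of_nat l * b), 1:])"

lemma poly_gfalling_poly: "poly (gfalling_poly b i) x = (\<Prod>l<i. x - of_nat l * b)"
  unfolding gfalling_poly_def by (simp add: poly_prod)

lemma degree_gfalling_poly: "degree (gfalling_poly b i) = i"
  and lead_coeff_gfalling_poly: "coeff (gfalling_poly b i) i = 1"
proof -
  have "degree (gfalling_poly b i) = i \<and> coeff (gfalling_poly b i) i = 1"
  proof (induction i)
    case 0
    then show ?case by (simp add: gfalling_poly_def)
  next
    case (Suc i)
    have split: "gfalling_poly b (Suc i) = gfalling_poly b i * [:- (of_nat i * b), 1:]"
      by (simp add: gfalling_poly_def)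
    have "gfalling_poly b i \<noteq> 0"
      using Suc by auto
    then have "degree (gfalling_poly b (Suc i)) = Suc i"
      using Suc unfolding split by (subst degree_mult_eq) auto
    moreover have "lead_coeff (gfalling_poly b (Suc i)) = 1"
      unfolding split lead_coeff_mult using Suc by simp
    ultimately show ?case by simp
  qed
  then show "degree (gfalling_poly b i) = i" "coeff (gfalling_poly b i) i = 1" by simp_all
qed

lemma gfalling_expansion_eq_0_imp:
  fixes c :: "nat \<Rightarrow> 'a::field_char_0"
  assumes "\<forall>x. (\<Sum>i\<le>n. c i * (\<Prod>l<i. x - of_nat l * b)) = 0"
  shows "\<forall>i\<le>n. c i = 0"
  using assms
proof (induction n)
  case 0
  then show ?case by simp
next
  case (Suc n)
  define Q where "Q = (\<Sum>i\<le>Suc n. smult (c i) (gfalling_poly b i))"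
  have "\<forall>x. poly Q x = 0"
    using Suc.prems by (simp add: Q_def poly_sum poly_gfalling_poly)
  then have "Q = 0"
    using poly_all_0_iff_0 by blast
  moreover have "coeff Q (Suc n) = c (Suc n)"
  proof -
    have "\<forall>i\<le>n. coeff (gfalling_poly b i) (Suc n) = 0"
      by (simp add: coeff_eq_0 degree_gfalling_poly)
    then show ?thesis
      by (simp add: Q_def coeff_sum sum.atMost_Suc lead_coeff_gfalling_poly)
  qed
  ultimately have top: "c (Suc n) = 0" by simp
  with Suc.prems have "\<forall>i\<le>n. c i = 0"
    by (intro Suc.IH) (simp add: sum.atMost_Suc)
  with top show ?case
    using le_Suc_eq by auto
qed

fun gstirling_rec :: "'a::field_char_0 \<Rightarrow> 'a \<Rightarrow> nat \<Rightarrow> nat \<Rightarrow> 'a" where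
  "gstirling_rec a b 0 k = (if k = 0 then 1 else 0)"
| "gstirling_rec a b (Suc n) k =
     (if k = 0 then 0 else gstirling_rec a b n (k - 1))
     + (of_nat k * b + of_nat n * a) * gstirling_rec a b n k"

lemma gstirling_rec_eq_0: "n < k \<Longrightarrow> gstirling_rec a b n k = 0"
  by (induction n arbitrary: k) auto

lemma rising_prod_expansion:
  "(\<Prod>i<n. x + of_nat i * a) = (\<Sum>i\<le>n. gstirling_rec a b n i * (\<Prod>l<i. x - of_nat l * b))"
proof (induction n)
  case 0
  then show ?case by simp
next
  case (Suc n)
  let ?F = "\<lambda>i. \<Prod>l<i. x - of_nat l * b"
  let ?c = "\<lambda>i. of_nat i * b + of_nat n * a"
  have step: "gstirling_rec a b n i * ?F i * (x + of_nat n * a)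
      = gstirling_rec a b n i * ?F (Suc i) + ?c i * gstirling_rec a b n i * ?F i" for i
    by (simp add: ring_distribs)
  have "(\<Prod>i<Suc n. x + of_nat i * a) = (\<Sum>i\<le>n. gstirling_rec a b n i * ?F i) * (x + of_nat n * a)"
    using Suc by simp
  also have "\<dots> = (\<Sum>i\<le>n. gstirling_rec a b n i * ?F (Suc i))
                 + (\<Sum>i\<le>n. ?c i * gstirling_rec a b n i * ?F i)"
    by (simp only: sum_distrib_right sum.distrib step)
  also have "(\<Sum>i\<le>n. gstirling_rec a b n i * ?F (Suc i))
           = (\<Sum>i\<le>Suc n. (if i = 0 then 0 else gstirling_rec a b n (i - 1)) * ?F i)"
    by (simp only: sum.atMost_Suc_shift) simp
  also have "(\<Sum>i\<le>n. ?c i * gstirling_rec a b n i * ?F i)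
           = (\<Sum>i\<le>Suc n. ?c i * gstirling_rec a b n i * ?F i)"
    by (simp add: gstirling_rec_eq_0)
  also have "(\<Sum>i\<le>Suc n. (if i = 0 then 0 else gstirling_rec a b n (i - 1)) * ?F i)
           + (\<Sum>i\<le>Suc n. ?c i * gstirling_rec a b n i * ?F i)
           = (\<Sum>i\<le>Suc n. gstirling_rec a b (Suc n) i * ?F i)"
    unfolding sum.distrib[symmetric] by (rule sum.cong) (simp_all add: distrib_right)
  finally show ?case .
qed

lemma gstirling_eq_gstirling_rec: "gstirling a b n k = gstirling_rec a b n k"
proof -
  let ?P = "\<lambda>c::nat \<Rightarrow> 'a. (\<forall>i>n. c i = 0) \<and>
        (\<forall>x. (\<Prod>i<n. x + of_nat i * a) = (\<Sum>i\<le>n. c i * (\<Prod>l<i. x - of_nat l * b)))"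
  have "(THE c. ?P c) = gstirling_rec a b n"
  proof (rule the_equality)
    show "?P (gstirling_rec a b n)"
      using rising_prod_expansion gstirling_rec_eq_0 by blast
  next
    fix c
    assume c: "?P c"
    have "\<forall>x. (\<Sum>i\<le>n. (c i - gstirling_rec a b n i) * (\<Prod>l<i. x - of_nat l * b)) = 0"
      using c rising_prod_expansion[where n=n and a=a and b=b]
      by (simp add: sum_subtractf left_diff_distrib)
    then have "\<forall>i\<le>n. c i = gstirling_rec a b n i"
      by (auto dest: gfalling_expansion_eq_0_imp)
    with c show "c = gstirling_rec a b n"
      by (metis gstirling_rec_eq_0 le_less_linear ext)
  qed
  then show ?thesis
    unfolding gstirling_def by simp
qed

lemma gstirling_Suc_Suc:
  "gstirling a b (Suc n) (Suc k) =
     gstirling a b n k + (of_nat (Suc k) * b + of_nat n * a) * gstirling a b n (Suc k)"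
  by (simp add: gstirling_eq_gstirling_rec)

definition tuple_cons :: "nat \<Rightarrow> (nat \<Rightarrow> nat) \<Rightarrow> nat \<Rightarrow> nat" where
  "tuple_cons x g = (\<lambda>t. if t = 0 then x else g (t - 1))"

lemma tuple_cons_inject:
  assumes "tuple_cons x g = tuple_cons y h"
  shows "x = y \<and> g = h"
proof -
  have "x = y"
    using fun_cong[OF assms, of 0] by (simp add: tuple_cons_def)
  moreover have "g t = h t" for t
    using fun_cong[OF assms, of "Suc t"] by (simp add: tuple_cons_def)
  ultimately show ?thesis by auto
qed

lemma mono_tuples_0: "mono_tuples 0 lo hi = {\<lambda>_. 0}"
  unfolding mono_tuples_def by auto

lemma mono_tuples_Suc:
  "mono_tuples (Suc r) lo hi = (\<lambda>(x, g). tuple_cons x g) ` (SIGMA x:{lo..hi}. mono_tuples r x hi)"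
proof (rule set_eqI, rule iffI)
  fix f
  assume f: "f \<in> mono_tuples (Suc r) lo hi"
  have "f = tuple_cons (f 0) (\<lambda>t. f (Suc t))"
    by (rule ext) (simp add: tuple_cons_def)
  moreover have "(\<lambda>t. f (Suc t)) \<in> mono_tuples r (f 0) hi" "f 0 \<in> {lo..hi}"
    using f unfolding mono_tuples_def by auto
  ultimately show "f \<in> (\<lambda>(x, g). tuple_cons x g) ` (SIGMA x:{lo..hi}. mono_tuples r x hi)"
    by (metis (no_types, lifting) SigmaI case_prod_conv image_eqI)
next
  fix f
  assume "f \<in> (\<lambda>(x, g). tuple_cons x g) ` (SIGMA x:{lo..hi}. mono_tuples r x hi)"
  then obtain x g where x: "lo \<le> x" "x \<le> hi" and g: "g \<in> mono_tuples r x hi"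
    and f: "f = tuple_cons x g"
    by auto
  have bounds: "\<forall>t<r. x \<le> g t \<and> g t \<le> hi"
    and mono: "\<forall>t u. t \<le> u \<longrightarrow> u < r \<longrightarrow> g t \<le> g u"
    and support: "\<forall>t\<ge>r. g t = 0"
    using g unfolding mono_tuples_def by auto
  have "lo \<le> f t \<and> f t \<le> hi" if "t < Suc r" for t
    using that x bounds by (cases t) (auto simp: f tuple_cons_def)
  moreover have "f t \<le> f u" if tu: "t \<le> u" "u < Suc r" for t u
  proof (cases t)
    case 0
    then show ?thesis
      using tu bounds by (cases u) (auto simp: f tuple_cons_def)
  next
    case (Suc t')
    then obtain u' where "u = Suc u'"
      using tu by (cases u) auto
    then show ?thesis
      using tu mono Suc by (auto simp: f tuple_cons_def)
  qed
  moreover have "f t = 0" if "Suc r \<le> t" for t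
    using that support by (cases t) (auto simp: f tuple_cons_def)
  ultimately show "f \<in> mono_tuples (Suc r) lo hi"
    unfolding mono_tuples_def by blast
qed

lemma finite_mono_tuples: "finite (mono_tuples r lo hi)"
  by (induction r arbitrary: lo) (simp_all add: mono_tuples_0 mono_tuples_Suc)

definition tuple_weight :: "'a::field_char_0 \<Rightarrow> 'a \<Rightarrow> nat \<Rightarrow> nat \<Rightarrow> nat \<Rightarrow> nat \<Rightarrow> 'a" where
  "tuple_weight a b m k r lo = (\<Sum>f\<in>mono_tuples r lo k.
      \<Prod>l<r. (a + b) * of_nat (f l) + a * (of_nat m - of_nat (r - l)))"

lemma tuple_weight_0: "tuple_weight a b m k 0 lo = 1"
  by (simp add: tuple_weight_def mono_tuples_0)

lemma tuple_weight_Suc: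
  "tuple_weight a b m k (Suc r) lo =
     (\<Sum>x\<in>{lo..k}. ((a + b) * of_nat x + a * (of_nat m - of_nat (Suc r))) * tuple_weight a b m k r x)"
proof -
  let ?h = "\<lambda>r f. \<Prod>l<r. (a + b) * of_nat (f l) + a * (of_nat m - of_nat (r - l))"
  have inj: "inj_on (\<lambda>(x, g). tuple_cons x g) (SIGMA x:{lo..k}. mono_tuples r x k)"
    by (auto intro!: inj_onI dest: tuple_cons_inject)
  have head: "?h (Suc r) (tuple_cons x g) = ((a + b) * of_nat x + a * (of_nat m - of_nat (Suc r))) * ?h r g"
    for x g
    by (simp only: prod.lessThan_Suc_shift) (simp add: tuple_cons_def)
  have "tuple_weight a b m k (Suc r) lo
      = (\<Sum>(x, g)\<in>(SIGMA x:{lo..k}. mono_tuples r x k). ?h (Suc r) (tuple_cons x g))"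
    unfolding tuple_weight_def mono_tuples_Suc by (subst sum.reindex[OF inj]) (simp add: split_beta)
  also have "\<dots> = (\<Sum>x\<in>{lo..k}. \<Sum>g\<in>mono_tuples r x k. ?h (Suc r) (tuple_cons x g))"
    by (subst sum.Sigma) (auto simp: finite_mono_tuples)
  also have "\<dots> = (\<Sum>x\<in>{lo..k}. ((a + b) * of_nat x + a * (of_nat m - of_nat (Suc r)))
                              * tuple_weight a b m k r x)"
    by (rule sum.cong[OF refl]) (simp only: head tuple_weight_def sum_distrib_left)
  finally show ?thesis .
qed

lemma tuple_weight_Suc_lower:
  "lo \<le> k \<Longrightarrow> tuple_weight a b m k (Suc r) lo =
     ((a + b) * of_nat lo + a * (of_nat m - of_nat (Suc r))) * tuple_weight a b m k r lo
     + tuple_weight a b m k (Suc r) (Suc lo)"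
  by (simp add: tuple_weight_Suc atLeastAtMost_insertL[symmetric])

lemma tuple_weight_Suc_empty: "k < lo \<Longrightarrow> tuple_weight a b m k (Suc r) lo = 0"
  by (simp add: tuple_weight_Suc)

text \<open>After one application of the recurrence, column \<open>k-j\<close> collects the terms that stayed there
  (factor \<open>c j\<close>) and those arriving from column \<open>k-j+1\<close>; splitting the tuples according to
  whether their first entry equals \<open>k-j\<close> shows that these add up to the new weight.\<close>

lemma gstirling_expansion_step:
  fixes a b :: "'a::field_char_0"
  assumes "Suc s \<le> k"
  shows "(\<Sum>j\<le>s. tuple_weight a b m k (s - j) (k - j) * gstirling a b (k + m - s) (k - j))
       = (\<Sum>j\<le>Suc s. tuple_weight a b m k (Suc s - j) (k - j) * gstirling a b (k + m - Suc s) (k - j))"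
proof -
  define n where "n = k + m - Suc s"
  let ?W = "tuple_weight a b m k"
  let ?S = "gstirling a b n"
  define c where "c j = (a + b) * of_nat (k - j) + a * (of_nat m - of_nat (Suc (s - j)))" for j
  have gstirling_step: "gstirling a b (k + m - s) (k - j) = ?S (k - Suc j) + c j * ?S (k - j)"
    if "j \<le> s" for j
  proof -
    have "k + m - s = Suc n" "k - j = Suc (k - Suc j)"
      using that assms by (auto simp: n_def)
    moreover have "c j = of_nat (k - j) * b + of_nat n * a"
      using that assms by (simp add: c_def n_def of_nat_diff algebra_simps)
    ultimately show ?thesis
      by (simp add: gstirling_Suc_Suc)
  qed
  have weight_step: "?W (Suc (s - j)) (k - j) = c j * ?W (s - j) (k - j) + ?W (Suc (s - j)) (Suc (k - j))"
    if "j \<le> s" for j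
    unfolding c_def by (rule tuple_weight_Suc_lower) (use that assms in simp)
  let ?moved = "\<lambda>j. ?W (Suc s - j) (Suc k - j) * ?S (k - j)"
  have "(\<Sum>j\<le>s. ?W (s - j) (k - j) * ?S (k - Suc j)) = (\<Sum>j\<le>Suc s. ?moved j)"
    by (simp only: sum.atMost_Suc_shift) (simp add: tuple_weight_Suc_empty)
  also have "\<dots> = (\<Sum>j\<le>s. ?W (Suc (s - j)) (Suc (k - j)) * ?S (k - j)) + ?S (k - Suc s)"
    using assms by (simp add: tuple_weight_0 Suc_diff_le)
  finally have moved: "(\<Sum>j\<le>s. ?W (s - j) (k - j) * ?S (k - Suc j))
      = (\<Sum>j\<le>s. ?W (Suc (s - j)) (Suc (k - j)) * ?S (k - j)) + ?S (k - Suc s)" .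
  have "(\<Sum>j\<le>s. ?W (s - j) (k - j) * gstirling a b (k + m - s) (k - j))
      = (\<Sum>j\<le>s. ?W (s - j) (k - j) * ?S (k - Suc j)) + (\<Sum>j\<le>s. c j * ?W (s - j) (k - j) * ?S (k - j))"
    by (simp add: gstirling_step sum.distrib[symmetric] algebra_simps)
  also have "\<dots> = (\<Sum>j\<le>s. c j * ?W (s - j) (k - j) * ?S (k - j)
                         + ?W (Suc (s - j)) (Suc (k - j)) * ?S (k - j)) + ?S (k - Suc s)"
    by (simp only: moved sum.distrib add_ac)
  also have "\<dots> = (\<Sum>j\<le>s. ?W (Suc (s - j)) (k - j) * ?S (k - j)) + ?S (k - Suc s)"
    by (auto intro!: sum.cong simp: weight_step distrib_right)
  also have "\<dots> = (\<Sum>j\<le>Suc s. ?W (Suc s - j) (k - j) * ?S (k - j))"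
    by (simp add: Suc_diff_le tuple_weight_0)
  finally show ?thesis
    by (simp add: n_def)
qed

lemma gstirling_expansion:
  fixes a b :: "'a::field_char_0"
  assumes "s \<le> k"
  shows "gstirling a b (k + m) k =
    (\<Sum>j\<le>s. tuple_weight a b m k (s - j) (k - j) * gstirling a b (k + m - s) (k - j))"
  using assms
proof (induction s)
  case 0
  then show ?case by (simp add: tuple_weight_0)
next
  case (Suc s)
  then have "gstirling a b (k + m) k =
    (\<Sum>j\<le>s. tuple_weight a b m k (s - j) (k - j) * gstirling a b (k + m - s) (k - j))"
    by simp
  also have "\<dots> = (\<Sum>j\<le>Suc s. tuple_weight a b m k (Suc s - j) (k - j)
                            * gstirling a b (k + m - Suc s) (k - j))"
    using Suc.prems by (rule gstirling_expansion_step)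
  finally show ?case .
qed

theorem theorem8:
  fixes a b :: "'a::field_char_0" and k m s :: nat
  assumes "s \<le> k"
  shows "gstirling a b (k + m) k =
    (\<Sum>j\<le>s. (\<Sum>f\<in>mono_tuples (s - j) (k - j) k.
                 \<Prod>l<s - j. (a + b) * of_nat (f l) + a * (of_nat m - of_nat (s - j - l)))
             * gstirling a b (k + m - s) (k - j))"
  using gstirling_expansion[OF assms, of a b m] unfolding tuple_weight_def .

end
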